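(* The topology automaton $M_K$ of a fractal gasket $K$ is a gasket automaton.
   Context: Let $\Delta\subset\mathbb R^2$ be the triangle with vertices $\omega_\alpha=(0,0)$, $\omega_\beta=(1,0)$, $\omega_\gamma=(1/2,\sqrt3/2)$. A fractal gasket is the attractor $K$ of $\{\varphi_j(z)=r_j(z+d_j)\}_{j=1}^N$, $r_j\in(0,1)$, $d_j\in\mathbb R^2$, with $\bigcup_j\varphi_j(\Delta)\subset\Delta$ and, for $i\neq j$, $\varphi_i(\Delta)\cap\varphi_j(\Delta)$ consisting only of common vertices. $\Sigma=\{1,\dots,N\}$; $\alpha=-1$ if $(0,0)\notin K$, else $\alpha$ is the index with $\varphi_\alpha((0,0))=(0,0)$; $\beta=-2$ or $\varphi_\beta$ fixes $(1,0)$; $\gamma=-3$ or $\varphi_\gamma$ fixes $\omega_\gamma$. Triangle automaton: state set $Q=\{S_{uv}:u\ne v\in\{\alpha,\beta,\gamma\}\}\cup\{Id,Exit\}$, input alphabet $\Sigma^2$, initial state $Id$, transition $\delta$ with $\delta(Id,(i,j))=Id$ iff $i=j$; $\delta(Id,(i,j))=S_{uv}\Rightarrow\delta(Id,(j,i))=S_{vu}$; $\delta(S_{uv},(i,j))=S_{uv}$ if $(i,j)=(v,u)$, else $Exit$. The topology automaton $M_K$ is the triangle automaton with, for $i\ne j$: $\delta(Id,(i,j))=S_{uv}$ if $u,v\in\Sigma$ and $\varphi_i(\omega_v)=\varphi_j(\omega_u)$; $\delta(Id,(i,j))=Exit$ if $\varphi_i(K)\cap\varphi_j(K)=\emptyset$.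 With $\mathcal P_{uv}=\{(i,j):\delta(Id,(i,j))=S_{uv}\}$, $i\triangleleft_{uv}j$ iff $(i,j)\in\mathcal P_{uv}$ (iff $j\triangleleft_{vu}i$), and $j$ $uv$-minimal iff no $i\triangleleft_{uv}j$: a gasket automaton is a triangle automaton with (Uniqueness) $i\triangleleft_{uv}j,i\triangleleft_{uv}j'\Rightarrow j=j'$; (Gathering) any two of $a\triangleleft_{\alpha\gamma}c$, $a\triangleleft_{\beta\gamma}b$, $b\triangleleft_{\alpha\beta}c$ imply the third; (Boundary) if $\alpha\in\Sigma$ it is $\alpha\gamma$- and $\alpha\beta$-minimal; if $\beta\in\Sigma$ it is $\beta\gamma$- and $\beta\alpha$-minimal; if $\gamma\in\Sigma$ it is $\gamma\alpha$- and $\gamma\beta$-minimal. *)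

theory Defs
  imports "HOL-Analysis.Analysis"
begin

datatype vlabel = VA | VB | VC

definition vert :: "vlabel \<Rightarrow> real \<times> real" where
  "vert u = (case u of VA \<Rightarrow> (0, 0) | VB \<Rightarrow> (1, 0) | VC \<Rightarrow> (1/2, sqrt 3 / 2))"

definition Delta :: "(real \<times> real) set" where
  "Delta = convex hull {vert VA, vert VB, vert VC}"

definition phi :: "(nat \<Rightarrow> real) \<Rightarrow> (nat \<Rightarrow> real \<times> real) \<Rightarrow> nat \<Rightarrow> real \<times> real \<Rightarrow> real \<times> real" where
  "phi r d j z = r j *\<^sub>R (z + d j)"

abbreviation Sig :: "nat \<Rightarrow> nat set" where
  "Sig N \<equiv> {1..N}"

definition is_attractor :: "nat \<Rightarrow> (nat \<Rightarrow> real) \<Rightarrow> (nat \<Rightarrow> real \<times> real) \<Rightarrow> (real \<times> real) set \<Rightarrow> bool" where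
  "is_attractor N r d K \<longleftrightarrow> compact K \<and> K \<noteq> {} \<and> K = (\<Union>j\<in>Sig N. phi r d j ` K)"

definition fractal_gasket :: "nat \<Rightarrow> (nat \<Rightarrow> real) \<Rightarrow> (nat \<Rightarrow> real \<times> real) \<Rightarrow> (real \<times> real) set \<Rightarrow> bool" where
  "fractal_gasket N r d K \<longleftrightarrow>
     (\<forall>j\<in>Sig N. 0 < r j \<and> r j < 1) \<and>
     (\<Union>j\<in>Sig N. phi r d j ` Delta) \<subseteq> Delta \<and>
     (\<forall>i\<in>Sig N. \<forall>j\<in>Sig N. i \<noteq> j \<longrightarrow>
        phi r d i ` Delta \<inter> phi r d j ` Delta \<subseteq>
          {p. \<exists>u v. p = phi r d i (vert u) \<and> p = phi r d j (vert v)}) \<and>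
     is_attractor N r d K"

definition vcode :: "vlabel \<Rightarrow> int" where
  "vcode u = (case u of VA \<Rightarrow> -1 | VB \<Rightarrow> -2 | VC \<Rightarrow> -3)"

definition vidx :: "nat \<Rightarrow> (nat \<Rightarrow> real) \<Rightarrow> (nat \<Rightarrow> real \<times> real) \<Rightarrow> (real \<times> real) set \<Rightarrow> vlabel \<Rightarrow> int" where
  "vidx N r d K u =
     (if vert u \<notin> K then vcode u
      else int (THE j. j \<in> Sig N \<and> phi r d j (vert u) = vert u))"

datatype state = Id | Exit | S vlabel vlabel

definition Qstates :: "state set" where
  "Qstates = {Id, Exit} \<union> {S u v | u v. u \<noteq> v}"

definition triangle_automaton :: "nat \<Rightarrow> (vlabel \<Rightarrow> int) \<Rightarrow> (state \<Rightarrow> nat \<times> nat \<Rightarrow> state) \<Rightarrow> bool" where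
  "triangle_automaton N idx \<delta> \<longleftrightarrow>
     (\<forall>q\<in>Qstates. \<forall>i\<in>Sig N. \<forall>j\<in>Sig N. \<delta> q (i, j) \<in> Qstates) \<and>
     (\<forall>i\<in>Sig N. \<forall>j\<in>Sig N. \<delta> Id (i, j) = Id \<longleftrightarrow> i = j) \<and>
     (\<forall>i\<in>Sig N. \<forall>j\<in>Sig N. \<forall>u v. \<delta> Id (i, j) = S u v \<longrightarrow> \<delta> Id (j, i) = S v u) \<and>
     (\<forall>u v. u \<noteq> v \<longrightarrow> (\<forall>i\<in>Sig N. \<forall>j\<in>Sig N.
        \<delta> (S u v) (i, j) = (if int i = idx v \<and> int j = idx u then S u v else Exit)))"

definition prec :: "nat \<Rightarrow> (state \<Rightarrow> nat \<times> nat \<Rightarrow> state) \<Rightarrow> vlabel \<Rightarrow> vlabel \<Rightarrow> nat \<Rightarrow> nat \<Rightarrow> bool" where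
  "prec N \<delta> u v i j \<longleftrightarrow> i \<in> Sig N \<and> j \<in> Sig N \<and> \<delta> Id (i, j) = S u v"

definition uv_minimal :: "nat \<Rightarrow> (state \<Rightarrow> nat \<times> nat \<Rightarrow> state) \<Rightarrow> vlabel \<Rightarrow> vlabel \<Rightarrow> nat \<Rightarrow> bool" where
  "uv_minimal N \<delta> u v j \<longleftrightarrow> \<not> (\<exists>i. prec N \<delta> u v i j)"

definition gasket_automaton :: "nat \<Rightarrow> (vlabel \<Rightarrow> int) \<Rightarrow> (state \<Rightarrow> nat \<times> nat \<Rightarrow> state) \<Rightarrow> bool" where
  "gasket_automaton N idx \<delta> \<longleftrightarrow>
     triangle_automaton N idx \<delta> \<and>
     \<comment> \<open>Uniqueness\<close>
     (\<forall>u v i j j'. u \<noteq> v \<longrightarrow> prec N \<delta> u v i j \<longrightarrow> prec N \<delta> u v i j' \<longrightarrow> j = j') \<and>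
     \<comment> \<open>Gathering\<close>
     (\<forall>a b c.
        (prec N \<delta> VA VC a c \<and> prec N \<delta> VB VC a b \<longrightarrow> prec N \<delta> VA VB b c) \<and>
        (prec N \<delta> VA VC a c \<and> prec N \<delta> VA VB b c \<longrightarrow> prec N \<delta> VB VC a b) \<and>
        (prec N \<delta> VB VC a b \<and> prec N \<delta> VA VB b c \<longrightarrow> prec N \<delta> VA VC a c)) \<and>
     \<comment> \<open>Boundary\<close>
     (idx VA \<in> int ` Sig N \<longrightarrow>
        uv_minimal N \<delta> VA VC (nat (idx VA)) \<and> uv_minimal N \<delta> VA VB (nat (idx VA))) \<and>
     (idx VB \<in> int ` Sig N \<longrightarrow>
        uv_minimal N \<delta> VB VC (nat (idx VB)) \<and> uv_minimal N \<delta> VB VA (nat (idx VB))) \<and>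
     (idx VC \<in> int ` Sig N \<longrightarrow>
        uv_minimal N \<delta> VC VA (nat (idx VC)) \<and> uv_minimal N \<delta> VC VB (nat (idx VC)))"

definition topology_automaton :: "nat \<Rightarrow> (nat \<Rightarrow> real) \<Rightarrow> (nat \<Rightarrow> real \<times> real) \<Rightarrow> (real \<times> real) set
    \<Rightarrow> (state \<Rightarrow> nat \<times> nat \<Rightarrow> state) \<Rightarrow> bool" where
  "topology_automaton N r d K \<delta> \<longleftrightarrow>
     triangle_automaton N (vidx N r d K) \<delta> \<and>
     (\<forall>i\<in>Sig N. \<forall>j\<in>Sig N. i \<noteq> j \<longrightarrow>
        (\<forall>u v. u \<noteq> v \<and> vidx N r d K u \<in> int ` Sig N \<and> vidx N r d K v \<in> int ` Sig N \<and>
               phi r d i (vert v) = phi r d j (vert u) \<longrightarrow> \<delta> Id (i, j) = S u v) \<and>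
        (phi r d i ` K \<inter> phi r d j ` K = {} \<longrightarrow> \<delta> Id (i, j) = Exit))"

end

(*
  The pieces phi_j(Delta) are triangles, so two of them meet in a convex set; the gasket
  condition makes that set finite, hence at most one point, and a common point of two pieces
  is the image of a vertex in each of them.  Since the vertices of Delta are extreme points
  and K lies in Delta, a map of the system can send a point of Delta to a vertex only if the
  point is that vertex: so a vertex in K is fixed by exactly one map (the indices alpha,
  beta, gamma are well defined), and no piece touches the fixing piece at that vertex with
  another of its vertices (Boundary).  Two pieces cannot meet at images of the same vertex,
  since they would then share a short segment (Uniqueness).  Hence in any topology automaton
  the transition from Id on (i, j) is S_uv exactly when phi_i(omega_v) = phi_j(omega_u), and
  Gathering is transitivity of equality of points.  Recording these contacts defines a
  topology automaton.
*)

theory Submission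
  imports Defs
begin

lemma extreme_point_extension_eq:
  fixes x k :: "'a::real_vector"
  assumes "x extreme_point_of A" "k \<in> A" "x + c *\<^sub>R (x - k) \<in> A" "0 < c"
  shows "k = x"
proof (rule ccontr)
  assume "k \<noteq> x"
  define p where "p = x + c *\<^sub>R (x - k)"
  have "p \<noteq> k"
  proof
    assume "p = k"
    then have "(1 + c) *\<^sub>R (x - k) = 0" by (simp add: p_def algebra_simps)
    with \<open>0 < c\<close> \<open>k \<noteq> x\<close> show False by simp
  qed
  moreover have "x = (1 - c / (1 + c)) *\<^sub>R p + (c / (1 + c)) *\<^sub>R k"
    using \<open>0 < c\<close> by (simp add: p_def field_simps flip: scaleR_add_left)
  ultimately have "x \<in> open_segment p k"
    using \<open>0 < c\<close> by (auto simp: in_segment(2) intro!: exI[of _ "c / (1 + c)"])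
  with assms(1-3) show False
    by (auto simp: extreme_point_of_def p_def)
qed

lemma convex_finite_imp_eq:
  assumes "convex A" "finite A" "p \<in> A" "q \<in> A"
  shows "p = q"
  using finite_subset[OF closed_segment_subset[OF assms(3,4,1)] assms(2)] by simp

text \<open>A point of K farthest from D is the image of a point of K that is no closer to D,
  so the contraction forces that largest distance to be 0.\<close>
lemma attractor_subset_invariant_set:
  fixes K D :: "'a::heine_borel set" and f :: "'i \<Rightarrow> 'a \<Rightarrow> 'a"
  assumes "compact K" "K \<noteq> {}" "K \<subseteq> (\<Union>j\<in>J. f j ` K)"
    and "closed D" "D \<noteq> {}" "\<And>j. j \<in> J \<Longrightarrow> f j ` D \<subseteq> D"
    and "\<And>j. j \<in> J \<Longrightarrow> 0 \<le> c j \<and> c j < 1"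
    and "\<And>j x y. j \<in> J \<Longrightarrow> dist (f j x) (f j y) \<le> c j * dist x y"
  shows "K \<subseteq> D"
proof -
  obtain x where "x \<in> K" and x_max: "\<And>y. y \<in> K \<Longrightarrow> infdist y D \<le> infdist x D"
    using continuous_attains_sup[OF assms(1,2) continuous_on_infdist[OF continuous_on_id]]
    by blast
  then obtain j y where "j \<in> J" "y \<in> K" "x = f j y"
    using assms(3) by blast
  obtain z where "z \<in> D" "infdist y D = dist y z"
    using infdist_attains_inf[OF assms(4,5)] by metis
  have "infdist x D \<le> dist x (f j z)"
    using assms(6)[OF \<open>j \<in> J\<close>] \<open>z \<in> D\<close> by (intro infdist_le) blast
  also have "\<dots> \<le> c j * infdist y D"
    using assms(8)[OF \<open>j \<in> J\<close>] \<open>x = f j y\<close> \<open>infdist y D = dist y z\<close> by simp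
  also have "\<dots> \<le> c j * infdist x D"
    using x_max[OF \<open>y \<in> K\<close>] assms(7)[OF \<open>j \<in> J\<close>] by (simp add: mult_left_mono)
  finally have "infdist x D \<le> 0"
    using assms(7)[OF \<open>j \<in> J\<close>] infdist_nonneg[of x D]
    by (metis mult_le_cancel_right1 not_le)
  then have "infdist y D = 0" if "y \<in> K" for y
    using x_max[OF that] infdist_nonneg[of y D] by linarith
  then show ?thesis
    using in_closed_iff_infdist_zero[OF assms(4,5)] by blast
qed

lemma triangle_automaton_Id_iff:
  assumes "triangle_automaton N idx \<delta>" "i \<in> Sig N" "j \<in> Sig N"
  shows "\<delta> Id (i, j) = Id \<longleftrightarrow> i = j"
  using assms unfolding triangle_automaton_def by blast

lemma vert_VA: "vert VA = 0"
  by (simp add: vert_def zero_prod_def)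

lemma UNIV_vlabel: "(UNIV :: vlabel set) = {VA, VB, VC}"
  using vlabel.exhaust by auto

lemma vert_inj: "inj vert"
proof (rule injI)
  show "vert u = vert v \<Longrightarrow> u = v" for u v
    by (cases u; cases v) (simp_all add: vert_def)
qed

lemma vert_extreme_point_of_Delta: "vert u extreme_point_of Delta"
proof -
  have "\<not> collinear {vert VA, vert VB, vert VC}"
    by (simp add: vert_VA collinear_lemma) (simp add: vert_def zero_prod_def)
  then have "\<not> affine_dependent {vert VA, vert VB, vert VC}"
    using collinear_3_eq_affine_dependent by blast
  then show ?thesis
    unfolding Delta_def
    by (cases u) (simp_all add: extreme_point_of_convex_hull_affine_independent)
qed

lemma vert_in_Delta: "vert u \<in> Delta"
  using vert_extreme_point_of_Delta extreme_point_of_def by blast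

lemma convex_Delta: "convex Delta"
  by (simp add: Delta_def)

lemma closed_Delta: "closed Delta"
  by (simp add: Delta_def compact_convex_hull compact_imp_closed)

lemma phi_eq_affinity: "phi r d j = (\<lambda>x. r j *\<^sub>R d j + r j *\<^sub>R x)"
  by (auto simp: phi_def algebra_simps)

lemma phi_diff: "phi r d j x - phi r d j y = r j *\<^sub>R (x - y)"
  by (simp add: phi_def algebra_simps)

lemma dist_phi: "0 \<le> r j \<Longrightarrow> dist (phi r d j x) (phi r d j y) = r j * dist x y"
  by (simp add: dist_norm phi_diff)

lemma inj_phi: "0 < r j \<Longrightarrow> inj (phi r d j)"
  by (rule injI) (metis phi_diff eq_iff_diff_eq_0 scaleR_eq_0_iff less_irrefl)

lemma convex_phi_image: "convex A \<Longrightarrow> convex (phi r d j ` A)"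
  by (simp add: phi_eq_affinity convex_affinity)

lemma phi_shrunk_segment_in_image:
  assumes "convex A" "a \<in> A" "b \<in> A" "0 \<le> m" "m \<le> r j"
  shows "phi r d j a + m *\<^sub>R (b - a) \<in> phi r d j ` A"
proof -
  define t where "t = m / r j"
  have "0 \<le> t" "t \<le> 1" "r j * t = m"
    using assms(4,5) by (auto simp: t_def divide_le_eq_1)
  then have "(1 - t) *\<^sub>R a + t *\<^sub>R b \<in> A"
    using convexD[OF assms(1-3)] by simp
  then have "a + t *\<^sub>R (b - a) \<in> A"
    by (simp add: algebra_simps)
  moreover have "phi r d j (a + t *\<^sub>R (b - a)) = phi r d j a + m *\<^sub>R (b - a)"
    using \<open>r j * t = m\<close> by (simp add: phi_def algebra_simps)
  ultimately show ?thesis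
    by (metis image_eqI)
qed

locale gasket =
  fixes N :: nat and r :: "nat \<Rightarrow> real" and d :: "nat \<Rightarrow> real \<times> real"
    and K :: "(real \<times> real) set"
  assumes fractal_gasket: "fractal_gasket N r d K"
begin

abbreviation \<phi> :: "nat \<Rightarrow> real \<times> real \<Rightarrow> real \<times> real" where
  "\<phi> \<equiv> phi r d"

abbreviation idx :: "vlabel \<Rightarrow> int" where
  "idx \<equiv> vidx N r d K"

lemma
  shows r_pos: "j \<in> Sig N \<Longrightarrow> 0 < r j"
    and r_less_one: "j \<in> Sig N \<Longrightarrow> r j < 1"
    and phi_Delta_subset: "j \<in> Sig N \<Longrightarrow> \<phi> j ` Delta \<subseteq> Delta"
    and pieces_meet_at_vertices: "\<lbrakk>i \<in> Sig N; j \<in> Sig N; i \<noteq> j\<rbrakk> \<Longrightarrow>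
      \<phi> i ` Delta \<inter> \<phi> j ` Delta \<subseteq> {p. \<exists>u v. p = \<phi> i (vert u) \<and> p = \<phi> j (vert v)}"
    and compact_K: "compact K"
    and K_nonempty: "K \<noteq> {}"
    and K_subset_pieces: "K \<subseteq> (\<Union>j\<in>Sig N. \<phi> j ` K)"
  using fractal_gasket unfolding fractal_gasket_def is_attractor_def by blast+

lemma K_subset_Delta: "K \<subseteq> Delta"
proof (rule attractor_subset_invariant_set[OF compact_K K_nonempty K_subset_pieces closed_Delta])
  show "Delta \<noteq> {}"
    using vert_in_Delta by blast
  show "\<phi> j ` Delta \<subseteq> Delta" if "j \<in> Sig N" for j
    using phi_Delta_subset[OF that] .
  show "0 \<le> r j \<and> r j < 1" if "j \<in> Sig N" for j
    using r_pos[OF that] r_less_one[OF that] by simp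
  show "dist (\<phi> j x) (\<phi> j y) \<le> r j * dist x y" if "j \<in> Sig N" for j x y
    using dist_phi r_pos[OF that] by simp
qed

lemma pieces_meet_in_one_point:
  assumes "i \<in> Sig N" "j \<in> Sig N" "i \<noteq> j"
    and "p \<in> \<phi> i ` Delta \<inter> \<phi> j ` Delta" "q \<in> \<phi> i ` Delta \<inter> \<phi> j ` Delta"
  shows "p = q"
proof (rule convex_finite_imp_eq[OF _ _ assms(4,5)])
  show "convex (\<phi> i ` Delta \<inter> \<phi> j ` Delta)"
    by (intro convex_Int convex_phi_image convex_Delta)
  have "\<phi> i ` Delta \<inter> \<phi> j ` Delta \<subseteq> \<phi> i ` range vert"
    using pieces_meet_at_vertices[OF assms(1-3)] by blast
  then show "finite (\<phi> i ` Delta \<inter> \<phi> j ` Delta)"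
    by (rule finite_subset) (simp add: UNIV_vlabel)
qed

lemma inj_piece: "j \<in> Sig N \<Longrightarrow> inj (\<phi> j)"
  using inj_phi r_pos by blast

lemma phi_vert_inj: "i \<in> Sig N \<Longrightarrow> \<phi> i (vert u) = \<phi> i (vert v) \<Longrightarrow> u = v"
  using inj_piece vert_inj by (metis injD)

text \<open>Two distinct pieces at a common point with the same label would share a segment
  pointing into the triangle.\<close>
lemma phi_vert_eq_imp_index_eq:
  assumes "i \<in> Sig N" "j \<in> Sig N" "\<phi> i (vert u) = \<phi> j (vert u)"
  shows "i = j"
proof (rule ccontr)
  assume "i \<noteq> j"
  obtain v where "v \<noteq> u"
    by (cases u) blast+
  define m where "m = min (r i) (r j)"
  have "0 < m"
    using r_pos assms(1,2) by (simp add: m_def)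
  let ?q = "\<phi> i (vert u) + m *\<^sub>R (vert v - vert u)"
  have "?q \<in> \<phi> i ` Delta" "\<phi> j (vert u) + m *\<^sub>R (vert v - vert u) \<in> \<phi> j ` Delta"
    by (rule phi_shrunk_segment_in_image[OF convex_Delta vert_in_Delta vert_in_Delta],
        use \<open>0 < m\<close> in \<open>simp_all add: m_def\<close>)+
  then have "?q \<in> \<phi> i ` Delta \<inter> \<phi> j ` Delta"
    using assms(3) by simp
  moreover have "\<phi> i (vert u) \<in> \<phi> i ` Delta \<inter> \<phi> j ` Delta"
    using assms(3) vert_in_Delta by (metis IntI image_eqI)
  ultimately have "?q = \<phi> i (vert u)"
    using pieces_meet_in_one_point[OF assms(1,2) \<open>i \<noteq> j\<close>] by blast
  then show False
    using \<open>0 < m\<close> \<open>v \<noteq> u\<close> vert_inj by (simp add: inj_eq)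
qed

text \<open>The image of the vertex, \<open>vert u + r j *\<^sub>R (vert u - k)\<close>, lies in Delta on the far
  side of the vertex from \<open>k\<close>, which extremality of the vertex forbids unless \<open>k = vert u\<close>.\<close>
lemma phi_eq_vert_imp_eq_vert:
  assumes "j \<in> Sig N" "k \<in> Delta" "\<phi> j k = vert u"
  shows "k = vert u"
proof (rule extreme_point_extension_eq[OF vert_extreme_point_of_Delta \<open>k \<in> Delta\<close>])
  have "\<phi> j (vert u) = vert u + r j *\<^sub>R (vert u - k)"
    using phi_diff[of r d j "vert u" k] assms(3) by (simp add: algebra_simps)
  then show "vert u + r j *\<^sub>R (vert u - k) \<in> Delta"
    using phi_Delta_subset[OF assms(1)] vert_in_Delta by (metis image_subset_iff)
qed (rule r_pos[OF assms(1)])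

lemma vert_in_K_imp_fixed:
  assumes "vert u \<in> K"
  shows "\<exists>j\<in>Sig N. \<phi> j (vert u) = vert u"
proof -
  obtain j k where "j \<in> Sig N" "k \<in> K" "\<phi> j k = vert u"
    using assms K_subset_pieces by fastforce
  moreover from \<open>k \<in> K\<close> have "k \<in> Delta"
    using K_subset_Delta by blast
  ultimately show ?thesis
    using phi_eq_vert_imp_eq_vert by metis
qed

lemma vidx_eq_int_iff:
  assumes "vert u \<in> K"
  shows "idx u = int j \<longleftrightarrow> j \<in> Sig N \<and> \<phi> j (vert u) = vert u"
proof -
  have "\<exists>!j. j \<in> Sig N \<and> \<phi> j (vert u) = vert u"
    using vert_in_K_imp_fixed[OF assms] phi_vert_eq_imp_index_eq by metis
  then show ?thesis
    using assms the1_equality[of "\<lambda>j. j \<in> Sig N \<and> \<phi> j (vert u) = vert u"]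
    by (auto simp: vidx_def)
qed

lemma vidx_in_Sig_iff: "idx u \<in> int ` Sig N \<longleftrightarrow> vert u \<in> K"
proof
  show "idx u \<in> int ` Sig N \<Longrightarrow> vert u \<in> K"
    by (cases u) (auto simp: vidx_def vcode_def split: if_splits)
  show "vert u \<in> K \<Longrightarrow> idx u \<in> int ` Sig N"
    using vert_in_K_imp_fixed vidx_eq_int_iff by blast
qed

definition contact :: "nat \<Rightarrow> nat \<Rightarrow> vlabel \<Rightarrow> vlabel \<Rightarrow> bool" where
  "contact i j u v \<longleftrightarrow> i \<in> Sig N \<and> j \<in> Sig N \<and> u \<noteq> v \<and> vert u \<in> K \<and> vert v \<in> K \<and>
     \<phi> i (vert v) = \<phi> j (vert u)"

lemma contact_imp_index_neq: "contact i j u v \<Longrightarrow> i \<noteq> j"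
  unfolding contact_def using phi_vert_inj by metis

lemma contact_sym: "contact i j u v \<Longrightarrow> contact j i v u"
  unfolding contact_def by auto

lemma contact_labels_unique:
  assumes "contact i j u v" "contact i j u' v'"
  shows "u = u' \<and> v = v'"
proof -
  have "\<phi> i (vert v) = \<phi> i (vert v')"
    using assms contact_imp_index_neq[OF assms(1)] pieces_meet_in_one_point[of i j] vert_in_Delta
    unfolding contact_def by (metis IntI image_eqI)
  then have "v = v'"
    using assms phi_vert_inj unfolding contact_def by blast
  then show ?thesis
    using assms phi_vert_inj unfolding contact_def by metis
qed

lemma contact_partner_unique: "contact i j u v \<Longrightarrow> contact i j' u v \<Longrightarrow> j = j'"
  unfolding contact_def using phi_vert_eq_imp_index_eq by metis

lemma pieces_meet_imp_contact:
  assumes "i \<in> Sig N" "j \<in> Sig N" "i \<noteq> j" "\<phi> i ` K \<inter> \<phi> j ` K \<noteq> {}"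
  shows "\<exists>u v. contact i j u v"
proof -
  obtain k k' where "k \<in> K" "k' \<in> K" and common: "\<phi> i k = \<phi> j k'"
    using assms(4) by blast
  then have "k \<in> Delta" "k' \<in> Delta"
    using K_subset_Delta by blast+
  then have "\<phi> i k \<in> \<phi> i ` Delta \<inter> \<phi> j ` Delta"
    using common by (metis IntI image_eqI)
  then obtain v u where "\<phi> i k = \<phi> i (vert v)" "\<phi> i k = \<phi> j (vert u)"
    using pieces_meet_at_vertices[OF assms(1-3)] by blast
  then have "k = vert v" "k' = vert u"
    using inj_piece[OF assms(1)] inj_piece[OF assms(2)] common by (metis injD)+
  moreover have "u \<noteq> v"
    using phi_vert_eq_imp_index_eq[OF assms(1,2)] assms(3) common calculation by blast
  ultimately have "contact i j u v"
    using assms(1,2) \<open>k \<in> K\<close> \<open>k' \<in> K\<close> common unfolding contact_def by simp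
  then show ?thesis
    by blast
qed

lemma contact_gathering:
  shows "contact a c VA VC \<Longrightarrow> contact a b VB VC \<Longrightarrow> contact b c VA VB"
    and "contact a c VA VC \<Longrightarrow> contact b c VA VB \<Longrightarrow> contact a b VB VC"
    and "contact a b VB VC \<Longrightarrow> contact b c VA VB \<Longrightarrow> contact a c VA VC"
  unfolding contact_def by auto

lemma not_contact_fixing_map:
  assumes "j \<in> Sig N" "\<phi> j (vert u) = vert u"
  shows "\<not> contact i j u v"
proof
  assume "contact i j u v"
  then have "i \<in> Sig N" "\<phi> i (vert v) = vert u" "u \<noteq> v"
    using assms(2) unfolding contact_def by auto
  then show False
    using phi_eq_vert_imp_eq_vert vert_in_Delta vert_inj by (metis injD)
qed

lemma topology_automaton_contact:
  assumes "topology_automaton N r d K \<delta>" "contact i j u v"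
  shows "\<delta> Id (i, j) = S u v"
proof -
  have "i \<in> Sig N" "j \<in> Sig N"
    using assms(2) unfolding contact_def by auto
  moreover have "i \<noteq> j"
    using contact_imp_index_neq[OF assms(2)] .
  moreover have "idx u \<in> int ` Sig N" "idx v \<in> int ` Sig N"
    using assms(2) vidx_in_Sig_iff unfolding contact_def by blast+
  ultimately show ?thesis
    using assms unfolding topology_automaton_def contact_def by blast
qed

lemma topology_automaton_disjoint:
  assumes "topology_automaton N r d K \<delta>" "i \<in> Sig N" "j \<in> Sig N" "i \<noteq> j"
    and "\<phi> i ` K \<inter> \<phi> j ` K = {}"
  shows "\<delta> Id (i, j) = Exit"
  using assms unfolding topology_automaton_def by blast

lemma prec_iff_contact:
  assumes "topology_automaton N r d K \<delta>"
  shows "prec N \<delta> u v i j \<longleftrightarrow> contact i j u v"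
proof
  assume "prec N \<delta> u v i j"
  then have ij: "i \<in> Sig N" "j \<in> Sig N" and "\<delta> Id (i, j) = S u v"
    unfolding prec_def by auto
  moreover have "i \<noteq> j"
    using triangle_automaton_Id_iff[OF _ ij] assms \<open>\<delta> Id (i, j) = S u v\<close>
    unfolding topology_automaton_def by fastforce
  moreover have "\<phi> i ` K \<inter> \<phi> j ` K \<noteq> {}"
    using topology_automaton_disjoint[OF assms ij \<open>i \<noteq> j\<close>] \<open>\<delta> Id (i, j) = S u v\<close> by auto
  ultimately obtain u' v' where "contact i j u' v'"
    using pieces_meet_imp_contact by blast
  with \<open>\<delta> Id (i, j) = S u v\<close> show "contact i j u v"
    using topology_automaton_contact[OF assms] by fastforce
next
  assume "contact i j u v"
  then show "prec N \<delta> u v i j"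
    using topology_automaton_contact[OF assms] unfolding prec_def contact_def by blast
qed

lemma uv_minimal_vidx:
  assumes "topology_automaton N r d K \<delta>" "idx u \<in> int ` Sig N"
  shows "uv_minimal N \<delta> u v (nat (idx u))"
proof -
  obtain j where "idx u = int j"
    using assms(2) by blast
  moreover have "vert u \<in> K"
    using assms(2) vidx_in_Sig_iff by blast
  ultimately have "j \<in> Sig N" "\<phi> j (vert u) = vert u"
    using vidx_eq_int_iff by auto
  then show ?thesis
    unfolding uv_minimal_def prec_iff_contact[OF assms(1)] \<open>idx u = int j\<close>
    using not_contact_fixing_map by simp
qed

lemma gasket_automaton_if_topology_automaton:
  assumes "topology_automaton N r d K \<delta>"
  shows "gasket_automaton N idx \<delta>"
  unfolding gasket_automaton_def prec_iff_contact[OF assms]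
proof (intro conjI)
  show "triangle_automaton N idx \<delta>"
    using assms unfolding topology_automaton_def by blast
  show "\<forall>u v i j j'. u \<noteq> v \<longrightarrow> contact i j u v \<longrightarrow> contact i j' u v \<longrightarrow> j = j'"
    using contact_partner_unique by blast
  show "\<forall>a b c.
      (contact a c VA VC \<and> contact a b VB VC \<longrightarrow> contact b c VA VB) \<and>
      (contact a c VA VC \<and> contact b c VA VB \<longrightarrow> contact a b VB VC) \<and>
      (contact a b VB VC \<and> contact b c VA VB \<longrightarrow> contact a c VA VC)"
    using contact_gathering by blast
qed (use uv_minimal_vidx[OF assms] in blast)+

definition contact_state :: "nat \<Rightarrow> nat \<Rightarrow> state" where
  "contact_state i j =
     (if \<exists>u v. contact i j u v then THE s. \<exists>u v. contact i j u v \<and> s = S u v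
      else if i = j then Id else Exit)"

lemma contact_state_if_contact:
  assumes "contact i j u v"
  shows "contact_state i j = S u v"
proof -
  have "(THE s. \<exists>u v. contact i j u v \<and> s = S u v) = S u v"
    by (rule the_equality) (use assms contact_labels_unique in auto)
  with assms show ?thesis
    unfolding contact_state_def by auto
qed

lemma contact_state_eq_S_iff: "contact_state i j = S u v \<longleftrightarrow> contact i j u v"
proof
  assume "contact_state i j = S u v"
  then obtain u' v' where "contact i j u' v'"
    unfolding contact_state_def by (auto split: if_splits)
  with \<open>contact_state i j = S u v\<close> show "contact i j u v"
    using contact_state_if_contact by fastforce
qed (rule contact_state_if_contact)

lemma contact_state_eq_Id_iff: "contact_state i j = Id \<longleftrightarrow> i = j"
proof (cases "\<exists>u v. contact i j u v")
  case True
  then obtain u v where "contact i j u v"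
    by blast
  then show ?thesis
    using contact_state_if_contact contact_imp_index_neq by simp
qed (simp add: contact_state_def)

fun topology_transition :: "state \<Rightarrow> nat \<times> nat \<Rightarrow> state" where
  "topology_transition Id (i, j) = contact_state i j"
| "topology_transition Exit _ = Exit"
| "topology_transition (S u v) (i, j) = (if int i = idx v \<and> int j = idx u then S u v else Exit)"

lemma topology_automaton_topology_transition: "topology_automaton N r d K topology_transition"
  unfolding topology_automaton_def triangle_automaton_def
proof (intro conjI ballI allI impI)
  show "topology_transition q (i, j) \<in> Qstates" if "q \<in> Qstates" for q i j
  proof (cases q)
    case Id
    then show ?thesis
      using contact_state_eq_S_iff[of i j] unfolding contact_def Qstates_def
      by (cases "contact_state i j") auto
  qed (use that in \<open>auto simp: Qstates_def\<close>)
  show "topology_transition Id (i, j) = Id \<longleftrightarrow> i = j" for i j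
    by (simp add: contact_state_eq_Id_iff)
  show "topology_transition Id (j, i) = S v u" if "topology_transition Id (i, j) = S u v" for i j u v
    using that contact_sym by (simp add: contact_state_eq_S_iff)
  show "topology_transition (S u v) (i, j) =
      (if int i = idx v \<and> int j = idx u then S u v else Exit)" for u v i j
    by simp
  show "topology_transition Id (i, j) = S u v"
    if "i \<in> Sig N" "j \<in> Sig N" "u \<noteq> v \<and> idx u \<in> int ` Sig N \<and> idx v \<in> int ` Sig N \<and>
      \<phi> i (vert v) = \<phi> j (vert u)" for i j u v
    using that vidx_in_Sig_iff by (simp add: contact_state_eq_S_iff contact_def)
  show "topology_transition Id (i, j) = Exit"
    if "i \<in> Sig N" "j \<in> Sig N" "i \<noteq> j" "\<phi> i ` K \<inter> \<phi> j ` K = {}" for i j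
  proof -
    have "\<not> contact i j u v" for u v
      using that(4) unfolding contact_def by blast
    with \<open>i \<noteq> j\<close> show ?thesis
      by (simp add: contact_state_def)
  qed
qed

end

theorem lemma4p1:
  fixes N :: nat and r :: "nat \<Rightarrow> real" and d :: "nat \<Rightarrow> real \<times> real"
    and K :: "(real \<times> real) set"
  assumes "fractal_gasket N r d K"
  shows "(\<exists>\<delta>. topology_automaton N r d K \<delta>) \<and>
         (\<forall>\<delta>. topology_automaton N r d K \<delta> \<longrightarrow> gasket_automaton N (vidx N r d K) \<delta>)"
proof -
  interpret gasket N r d K
    by (fact gasket.intro[OF assms])
  show ?thesis
    using topology_automaton_topology_transition gasket_automaton_if_topology_automaton by blast
qed

end
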